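(* (1) For every LTL formula $\varphi$ in PNF and every $x\in\Sigma$, $\partial_x(\varphi)\subseteq\mathrm{SET}(\partial^+(\varphi))$. (2) For all $\varphi'\in\partial^+(\varphi)$ and $x\in\Sigma$, $\partial_x(\varphi')\subseteq\mathrm{SET}(\partial^+(\varphi))$.
   Context: LTL formulae in PNF: $\varphi,\psi ::= p \mid \neg p \mid \mathbf{tt} \mid \mathbf{ff} \mid \varphi\wedge\psi \mid \varphi\vee\psi \mid \bigcirc\varphi \mid \varphi\,\mathcal{U}\,\psi \mid \varphi\,\mathcal{R}\,\psi$, over words in $\Sigma^\omega$ with an interpretation $I:\Sigma\to\mathcal{P}(AP)$. Temporal formula: does not start with $\wedge$ or $\vee$. Monomials $\mu,\nu$: $\mathbf{ff}$ or consistent sets of literals; $x\models\mu$ means all literals of $\mu$ hold under $I(x)$; $\mu\sqcap\nu$ is $\mathbf{ff}$ if either is $\mathbf{ff}$ or $\mu\cup\nu$ is contradictory, else $\mu\cup\nu$. $\varphi\,\dot\wedge\,\psi$: formal conjunction, normalized modulo associativity, commutativity, idempotence ($\mathbf{tt}$ = empty formal conjunction). $\mathrm{simp}(\varphi\wedge\psi)=\{\varphi'\,\dot\wedge\,\psi'\mid\varphi'\in\mathrm{simp}(\varphi),\psi'\in\mathrm{simp}(\psi)\}$, $\mathrm{simp}(\varphi\vee\psi)=\mathrm{simp}(\varphi)\cup\mathrm{simp}(\psi)$, $\mathrm{simp}(\varphi)=\{\varphi\}$ for temporal $\varphi$. Linear factors: $\mathrm{LF}(\ell)=\{\langle\{\ell\},\mathbf{tt}\rangle\}$,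 $\mathrm{LF}(\mathbf{tt})=\{\langle\mathbf{tt},\mathbf{tt}\rangle\}$, $\mathrm{LF}(\mathbf{ff})=\{\}$, $\mathrm{LF}(\varphi\vee\psi)=\mathrm{LF}(\varphi)\cup\mathrm{LF}(\psi)$, $\mathrm{LF}(\varphi\wedge\psi)=\{\langle\mu\sqcap\nu,\varphi'\,\dot\wedge\,\psi'\rangle\mid\langle\mu,\varphi'\rangle\in\mathrm{LF}(\varphi),\langle\nu,\psi'\rangle\in\mathrm{LF}(\psi),\mu\sqcap\nu\neq\mathbf{ff}\}$, $\mathrm{LF}(\bigcirc\varphi)=\{\langle\mathbf{tt},\varphi'\rangle\mid\varphi'\in\mathrm{simp}(\varphi)\}$, $\mathrm{LF}(\varphi\,\mathcal{U}\,\psi)=\mathrm{LF}(\psi)\cup\{\langle\mu,\varphi'\,\dot\wedge\,(\varphi\,\mathcal{U}\,\psi)\rangle\mid\langle\mu,\varphi'\rangle\in\mathrm{LF}(\varphi)\}$, $\mathrm{LF}(\varphi\,\mathcal{R}\,\psi)=\{\langle\mu\sqcap\nu,\varphi'\,\dot\wedge\,\psi'\rangle\mid\langle\mu,\varphi'\rangle\in\mathrm{LF}(\varphi),\langle\nu,\psi'\rangle\in\mathrm{LF}(\psi),\mu\sqcap\nu\neq\mathbf{ff}\}\cup\{\langle\nu,\psi'\,\dot\wedge\,(\varphi\,\mathcal{R}\,\psi)\rangle\mid\langle\nu,\psi'\rangle\in\mathrm{LF}(\psi)\}$. Partial derivatives: $\partial_x(\varphi)=\{\varphi'\mid\langle\mu,\varphi'\rangle\in\mathrm{LF}(\varphi),x\models\mu\}$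 for temporal $\varphi$, $\partial_x(\mathbf{tt})=\{\mathbf{tt}\}$, $\partial_x(\varphi\,\dot\wedge\,\psi)=\{\varphi'\,\dot\wedge\,\psi'\mid\varphi'\in\partial_x(\varphi),\psi'\in\partial_x(\psi)\}$. Iterated partial derivatives: $\partial^+(\ell)=\{\ell\}$, $\partial^+(\mathbf{tt})=\{\mathbf{tt}\}$, $\partial^+(\mathbf{ff})=\{\mathbf{ff}\}$, $\partial^+(\varphi\vee\psi)=\partial^+(\varphi\wedge\psi)=\partial^+(\varphi)\cup\partial^+(\psi)$, $\partial^+(\bigcirc\varphi)=\{\bigcirc\varphi\}\cup\partial^+(\varphi)$, $\partial^+(\varphi\,\mathcal{U}\,\psi)=\{\varphi\,\mathcal{U}\,\psi\}\cup\partial^+(\varphi)\cup\partial^+(\psi)$, $\partial^+(\varphi\,\mathcal{R}\,\psi)=\{\varphi\,\mathcal{R}\,\psi\}\cup\partial^+(\varphi)\cup\partial^+(\psi)$. For an ordered set $X=\{x_1,x_2,\dots\}$, $\mathrm{SET}(X)=\{\mathbf{tt}\}\cup\{x_{i_1}\,\dot\wedge\,\cdots\,\dot\wedge\,x_{i_n}\mid n\ge1,i_1<\dots<i_n\}$. *)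

theory Defs
  imports Main
begin

datatype 'a ltl =
    TT | FF | Prop 'a | NProp 'a
  | And "'a ltl" "'a ltl" | Or "'a ltl" "'a ltl"
  | Next "'a ltl" | Until "'a ltl" "'a ltl" | Release "'a ltl" "'a ltl"

text \<open>Formal conjunctions (normalised modulo ACI) are represented as sets of
  formulae (their conjuncts); tt is the empty formal conjunction.\<close>
definition fc :: "'a ltl \<Rightarrow> 'a ltl set" where
  "fc \<phi> = (if \<phi> = TT then {} else {\<phi>})"

text \<open>Monomials: None = ff, Some L = a (consistent) set of literals.\<close>
type_synonym 'a mono = "'a ltl set option"

definition consistent :: "'a ltl set \<Rightarrow> bool" where
  "consistent L = (\<not> (\<exists>p. Prop p \<in> L \<and> NProp p \<in> L))"

fun mmeet :: "'a mono \<Rightarrow> 'a mono \<Rightarrow> 'a mono" where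
  "mmeet (Some a) (Some b) = (if consistent (a \<union> b) then Some (a \<union> b) else None)"
| "mmeet _ _ = None"

fun lit_holds :: "'a set \<Rightarrow> 'a ltl \<Rightarrow> bool" where
  "lit_holds A (Prop p) = (p \<in> A)"
| "lit_holds A (NProp p) = (p \<notin> A)"
| "lit_holds A _ = False"

definition models :: "('s \<Rightarrow> 'a set) \<Rightarrow> 's \<Rightarrow> 'a mono \<Rightarrow> bool" where
  "models I x \<mu> = (case \<mu> of None \<Rightarrow> False | Some L \<Rightarrow> (\<forall>l \<in> L. lit_holds (I x) l))"

fun simp_ltl :: "'a ltl \<Rightarrow> 'a ltl set set" where
  "simp_ltl (And a b) = {A \<union> B | A B. A \<in> simp_ltl a \<and> B \<in> simp_ltl b}"
| "simp_ltl (Or a b) = simp_ltl a \<union> simp_ltl b"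
| "simp_ltl \<phi> = {fc \<phi>}"

fun LF :: "'a ltl \<Rightarrow> ('a mono \<times> 'a ltl set) set" where
  "LF TT = {(Some {}, {})}"
| "LF FF = {}"
| "LF (Prop p) = {(Some {Prop p}, {})}"
| "LF (NProp p) = {(Some {NProp p}, {})}"
| "LF (Or a b) = LF a \<union> LF b"
| "LF (And a b) = {(mmeet m n, A \<union> B) | m n A B.
      (m, A) \<in> LF a \<and> (n, B) \<in> LF b \<and> mmeet m n \<noteq> None}"
| "LF (Next a) = {(Some {}, A) | A. A \<in> simp_ltl a}"
| "LF (Until a b) = LF b \<union> {(m, A \<union> {Until a b}) | m A. (m, A) \<in> LF a}"
| "LF (Release a b) = {(mmeet m n, A \<union> B) | m n A B.
      (m, A) \<in> LF a \<and> (n, B) \<in> LF b \<and> mmeet m n \<noteq> None}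
    \<union> {(n, B \<union> {Release a b}) | n B. (n, B) \<in> LF b}"

definition pderiv :: "('s \<Rightarrow> 'a set) \<Rightarrow> 's \<Rightarrow> 'a ltl \<Rightarrow> 'a ltl set set" where
  "pderiv I x \<phi> = {A. \<exists>\<mu>. (\<mu>, A) \<in> LF \<phi> \<and> models I x \<mu>}"

definition pderiv_conj :: "('s \<Rightarrow> 'a set) \<Rightarrow> 's \<Rightarrow> 'a ltl set \<Rightarrow> 'a ltl set set" where
  "pderiv_conj I x S = {\<Union> (f ` S) | f. \<forall>\<phi> \<in> S. f \<phi> \<in> pderiv I x \<phi>}"

fun pderiv_plus :: "'a ltl \<Rightarrow> 'a ltl set" where
  "pderiv_plus TT = {TT}"
| "pderiv_plus FF = {FF}"
| "pderiv_plus (Prop p) = {Prop p}"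
| "pderiv_plus (NProp p) = {NProp p}"
| "pderiv_plus (Or a b) = pderiv_plus a \<union> pderiv_plus b"
| "pderiv_plus (And a b) = pderiv_plus a \<union> pderiv_plus b"
| "pderiv_plus (Next a) = {Next a} \<union> pderiv_plus a"
| "pderiv_plus (Until a b) = {Until a b} \<union> pderiv_plus a \<union> pderiv_plus b"
| "pderiv_plus (Release a b) = {Release a b} \<union> pderiv_plus a \<union> pderiv_plus b"

definition SETc :: "'a ltl set \<Rightarrow> 'a ltl set set" where
  "SETc X = {\<Union> (fc ` Y) | Y. Y \<subseteq> X \<and> finite Y}"

end

theory Submission
  imports Defs
begin

text \<open>Every formal conjunction occurring in a linear factor of \<open>\<phi>\<close> is a finite set
  of non-\<open>tt\<close> subformulas in \<open>\<partial>\<^sup>+(\<phi>)\<close>, hence already an element of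
  \<open>SET(\<partial>\<^sup>+(\<phi>))\<close>; and \<open>\<partial>\<^sup>+\<close> is closed under itself, so the
  same holds for the derivatives of every \<open>\<phi>' \<in> \<partial>\<^sup>+(\<phi>)\<close>.\<close>

lemma simp_ltl_subset_pderiv_plus: "A \<in> simp_ltl a \<Longrightarrow> A \<subseteq> pderiv_plus a - {TT}"
  by (induction a arbitrary: A) (auto simp: fc_def)

lemma finite_simp_ltl: "A \<in> simp_ltl a \<Longrightarrow> finite A"
  by (induction a arbitrary: A) (auto simp: fc_def)

lemma LF_subset_pderiv_plus: "(m, A) \<in> LF a \<Longrightarrow> A \<subseteq> pderiv_plus a - {TT}"
proof (induction a arbitrary: m A)
  case (Next a)
  then show ?case using simp_ltl_subset_pderiv_plus[of A a] by auto
qed fastforce+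

lemma finite_LF: "(m, A) \<in> LF a \<Longrightarrow> finite A"
proof (induction a arbitrary: m A)
  case (Next a)
  then show ?case using finite_simp_ltl[of A a] by auto
qed fastforce+

lemma finite_subset_in_SETc:
  assumes "A \<subseteq> X - {TT}" and "finite A"
  shows "A \<in> SETc X"
proof -
  have "\<Union> (fc ` A) = A" using assms(1) by (auto simp: fc_def)
  then show ?thesis unfolding SETc_def using assms by blast
qed

lemma pderiv_subset_SETc: "pderiv I x \<phi> \<subseteq> SETc (pderiv_plus \<phi>)"
  by (auto simp: pderiv_def intro!: finite_subset_in_SETc dest: LF_subset_pderiv_plus finite_LF)

lemma pderiv_plus_closed: "\<phi>' \<in> pderiv_plus \<phi> \<Longrightarrow> pderiv_plus \<phi>' \<subseteq> pderiv_plus \<phi>"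
  by (induction \<phi>) auto

lemma SETc_mono: "X \<subseteq> Y \<Longrightarrow> SETc X \<subseteq> SETc Y"
  unfolding SETc_def by blast

theorem lemma7:
  fixes I :: "'s \<Rightarrow> 'a set"
  shows "(\<forall>\<phi> :: 'a ltl. \<forall>x. pderiv I x \<phi> \<subseteq> SETc (pderiv_plus \<phi>))
       \<and> (\<forall>\<phi> :: 'a ltl. \<forall>\<phi>' \<in> pderiv_plus \<phi>. \<forall>x. pderiv I x \<phi>' \<subseteq> SETc (pderiv_plus \<phi>))"
proof (intro conjI allI ballI)
  fix \<phi> :: "'a ltl" and x
  show "pderiv I x \<phi> \<subseteq> SETc (pderiv_plus \<phi>)" by (rule pderiv_subset_SETc)
next
  fix \<phi> \<phi>' :: "'a ltl" and x
  assume "\<phi>' \<in> pderiv_plus \<phi>"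
  then have "SETc (pderiv_plus \<phi>') \<subseteq> SETc (pderiv_plus \<phi>)"
    by (intro SETc_mono pderiv_plus_closed)
  with pderiv_subset_SETc[of I x \<phi>'] show "pderiv I x \<phi>' \<subseteq> SETc (pderiv_plus \<phi>)"
    by (rule subset_trans)
qed

end
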